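(* Let $\mathbf a=(a_1,\dots,a_m)$ be an admissible sequence and suppose there is $k$ with $1\le k<m$ and $a_k\le 2k$. Put $\mathbf a'=(a_1,\dots,a_k)$ and $\mathbf a''=(a_{k+1}-2k,\dots,a_m-2k)$. Then $\mathbf a'$ and $\mathbf a''$ are admissible, and for every nonnegative integer $x$, $$\det\mathbf m(\mathbf a,x)=\det\mathbf m(\mathbf a',x)\cdot\det\mathbf m(\mathbf a'',x+k).$$
   Context: $q$ is an indeterminate; $(a;q)_n=\prod_{j=0}^{n-1}(1-aq^j)$ for $n\ge0$. A finite sequence of integers $\mathbf a=(a_1,\dots,a_m)$ is admissible if it is strictly increasing and $2i-1\le a_i\le 2m$ for all $1\le i\le m$. For a sequence $\mathbf a$ of length $m$ and a nonnegative integer $x$, $\mathbf m(\mathbf a,x)$ is the $m\times m$ matrix with $(i,j)$-entry $\frac{(q^{2i+2x};q^2)_{a_j+1-2i}}{(q;q)_{a_j+1-2i}}$ if $a_j+1-2i\ge 0$ and $0$ otherwise. *)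

theory Defs
  imports "Jordan_Normal_Form.Determinant" "HOL-Computational_Algebra.Formal_Power_Series"
begin

definition qpoch :: "'a::comm_ring_1 \<Rightarrow> 'a \<Rightarrow> nat \<Rightarrow> 'a" where
  "qpoch a q n = (\<Prod>j<n. (1 - a * q ^ j))"

text \<open>The indeterminate q, realised as the formal variable in rational formal power series.\<close>
abbreviation qX :: "rat fps" where "qX \<equiv> fps_X"

text \<open>Admissible sequences (1-based index i corresponds to list position i-1).\<close>
definition admissible :: "int list \<Rightarrow> bool" where
  "admissible a \<longleftrightarrow> sorted_wrt (<) a \<and>
     (\<forall>i\<in>{1..length a}. 2 * int i - 1 \<le> a ! (i - 1) \<and> a ! (i - 1) \<le> 2 * int (length a))"

text \<open>The (i,j)-entry (1-based i) for column value aj.\<close>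
definition mentry :: "nat \<Rightarrow> int \<Rightarrow> nat \<Rightarrow> rat fps" where
  "mentry i aj x = (if aj + 1 - 2 * int i \<ge> 0
      then qpoch (qX ^ (2 * i + 2 * x)) (qX ^ 2) (nat (aj + 1 - 2 * int i))
           / qpoch qX qX (nat (aj + 1 - 2 * int i))
      else 0)"

definition mmat :: "int list \<Rightarrow> nat \<Rightarrow> rat fps mat" where
  "mmat a x = mat (length a) (length a) (\<lambda>(i, j). mentry (i + 1) (a ! j) x)"

end

theory Submission
  imports Defs
begin

text \<open>If \<open>a\<^sub>k \<le> 2k\<close>, every entry of \<open>m(a,x)\<close> below row \<open>k\<close> in the first \<open>k\<close> columns vanishes,
  so \<open>m(a,x)\<close> is block upper triangular. Its upper left block is \<open>m(a',x)\<close>, and because the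
  entry in row \<open>i\<close> depends on \<open>i\<close> only through \<open>a\<^sub>j - 2i\<close> and \<open>i + x\<close>, the lower right block is
  \<open>m(a'',x+k)\<close>.\<close>

lemma mentry_eq_0: "aj + 1 < 2 * int i \<Longrightarrow> mentry i aj x = 0"
  unfolding mentry_def by simp

lemma mentry_shift: "mentry (k + i) aj x = mentry i (aj - 2 * int k) (x + k)"
proof -
  have "aj + 1 - 2 * int (k + i) = (aj - 2 * int k) + 1 - 2 * int i"
    and "2 * (k + i) + 2 * x = 2 * i + 2 * (x + k)" by simp_all
  then show ?thesis unfolding mentry_def by presburger
qed

lemma sorted_wrt_less_nth_le:
  fixes a :: "'a::linorder list"
  assumes "sorted_wrt (<) a" and "j < k" and "k \<le> length a"
  shows "a ! j \<le> a ! (k - 1)"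
  using assms by (cases "j = k - 1") (auto simp: sorted_wrt_iff_nth_less less_imp_le)

lemma admissible_take:
  assumes "admissible a" and "1 \<le> k" and "k \<le> length a" and "a ! (k - 1) \<le> 2 * int k"
  shows "admissible (take k a)"
  unfolding admissible_def
proof (intro conjI ballI)
  have sorted: "sorted_wrt (<) a" and bounds: "\<And>i. i \<in> {1..length a} \<Longrightarrow> 2 * int i - 1 \<le> a ! (i - 1)"
    using assms(1) unfolding admissible_def by auto
  then show "sorted_wrt (<) (take k a)" by (simp add: sorted_wrt_take)
  fix i assume "i \<in> {1..length (take k a)}"
  then have i: "1 \<le> i" "i \<le> k" using assms(3) by auto
  show "2 * int i - 1 \<le> take k a ! (i - 1)" using bounds[of i] i assms(3) by simp
  have "a ! (i - 1) \<le> a ! (k - 1)"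
    using sorted_wrt_less_nth_le[OF sorted, of "i - 1" k] i assms(3) by simp
  then show "take k a ! (i - 1) \<le> 2 * int (length (take k a))"
    using i assms(3,4) by (simp add: min_def)
qed

lemma admissible_shift_drop:
  assumes "admissible a" and "k \<le> length a"
  shows "admissible (map (\<lambda>t. t - 2 * int k) (drop k a))"
  unfolding admissible_def
proof (intro conjI ballI)
  have sorted: "sorted_wrt (<) a" and bounds: "\<And>i. i \<in> {1..length a} \<Longrightarrow>
      2 * int i - 1 \<le> a ! (i - 1) \<and> a ! (i - 1) \<le> 2 * int (length a)"
    using assms(1) unfolding admissible_def by auto
  then show "sorted_wrt (<) (map (\<lambda>t. t - 2 * int k) (drop k a))"
    by (simp add: sorted_wrt_drop sorted_wrt_map)
  fix i assume "i \<in> {1..length (map (\<lambda>t. t - 2 * int k) (drop k a))}"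
  then have i: "1 \<le> i" "k + i \<le> length a" by auto
  have "map (\<lambda>t. t - 2 * int k) (drop k a) ! (i - 1) = a ! (k + i - 1) - 2 * int k"
    using i by (simp add: add.commute)
  then show "2 * int i - 1 \<le> map (\<lambda>t. t - 2 * int k) (drop k a) ! (i - 1)"
    and "map (\<lambda>t. t - 2 * int k) (drop k a) ! (i - 1)
          \<le> 2 * int (length (map (\<lambda>t. t - 2 * int k) (drop k a)))"
    using bounds[of "k + i"] i by auto
qed

lemma mmat_four_block:
  assumes "k \<le> length a" and "\<forall>j<k. a ! j \<le> 2 * int k"
  shows "mmat a x = four_block_mat (mmat (take k a) x)
           (mat k (length a - k) (\<lambda>(i, j). mentry (i + 1) (a ! (k + j)) x))
           (0\<^sub>m (length a - k) k)
           (mmat (map (\<lambda>t. t - 2 * int k) (drop k a)) (x + k))"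
    (is "_ = four_block_mat ?A ?B ?C ?D")
proof (rule eq_matI)
  fix i j assume "i < dim_row (four_block_mat ?A ?B ?C ?D)" "j < dim_col (four_block_mat ?A ?B ?C ?D)"
  then have i: "i < length a" and j: "j < length a" using assms(1) by (auto simp: mmat_def)
  consider "i < k" | "k \<le> i" "j < k" | "k \<le> i" "k \<le> j" by linarith
  then show "mmat a x $$ (i, j) = four_block_mat ?A ?B ?C ?D $$ (i, j)"
  proof cases
    case 1
    then show ?thesis using i j by (auto simp: mmat_def)
  next
    case 2
    then have "mentry (i + 1) (a ! j) x = 0"
      using assms(2) by (intro mentry_eq_0) force
    then show ?thesis using i j 2 assms(1) by (auto simp: mmat_def)
  next
    case 3
    then have "mentry (i + 1) (a ! j) x = mentry (i - k + 1) (a ! j - 2 * int k) (x + k)"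
      using mentry_shift[of k "i - k + 1" "a ! j" x] by simp
    then show ?thesis using i j 3 assms(1) by (auto simp: mmat_def)
  qed
qed (use assms(1) in \<open>auto simp: mmat_def\<close>)

lemma det_mmat_split:
  assumes "k \<le> length a" and "\<forall>j<k. a ! j \<le> 2 * int k"
  shows "det (mmat a x) =
           det (mmat (take k a) x) * det (mmat (map (\<lambda>t. t - 2 * int k) (drop k a)) (x + k))"
  by (subst mmat_four_block[OF assms], rule det_four_block_mat_lower_left_zero)
     (use assms(1) in \<open>auto simp: mmat_def min_def\<close>)

theorem mainTheorem5:
  fixes a :: "int list" and k :: nat
  assumes "admissible a" and "1 \<le> k" and "k < length a" and "a ! (k - 1) \<le> 2 * int k"
  shows "admissible (take k a) \<and>
         admissible (map (\<lambda>t. t - 2 * int k) (drop k a)) \<and>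
         (\<forall>x::nat. det (mmat a x) =
            det (mmat (take k a) x) * det (mmat (map (\<lambda>t. t - 2 * int k) (drop k a)) (x + k)))"
proof -
  have "\<forall>j<k. a ! j \<le> 2 * int k"
    using sorted_wrt_less_nth_le[of a _ k] assms unfolding admissible_def by force
  then show ?thesis
    using admissible_take[OF assms(1,2) _ assms(4)] admissible_shift_drop[OF assms(1)]
      det_mmat_split[of k a] assms(3) by simp
qed

end
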